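(* Let $H(x)=\cos x$ for $|x|\le\pi/2$ and $H(x)=0$ for $|x|\ge\pi/2$. Let $(\lambda_n)_{n\in\mathbb{Z}}$ be a strictly increasing sequence of real numbers satisfying $\lambda_{n+2}-\lambda_n\ge\pi$ for all $n\in\mathbb{Z}$. Then for every finitely supported sequence $(a_n)_{n\in\mathbb{Z}}$ of real numbers, the function $G(x)=\sum_n a_n H^2(x+\lambda_n)$ satisfies \[ \int_{-\infty}^{\infty}|G'(x)|^2\,dx\le 4\int_{-\infty}^{\infty}|G(x)|^2\,dx . \]
   Context: $H^2(x)=(H(x))^2$. *)

theory Defs
  imports "HOL-Analysis.Analysis"
begin

definition H :: "real \<Rightarrow> real" where
  "H x = (if \<bar>x\<bar> \<le> pi / 2 then cos x else 0)"

end

theory Submission imports Defs begin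

(* Write h = H^2, so that h' = -2 sin(x) H(x) is continuous, and away from the two kinks
   x = +-pi/2 we have h'' = 2 chi - 4 h, where chi is the indicator of (-pi/2, pi/2).
   For G = sum a_n h(. + lam_n) put P = sum a_n chi(. + lam_n); then G'' = 2P - 4G
   except at finitely many points, and G, G' vanish outside a bounded interval.
   Integration by parts gives   int G'^2 = - int G G'' = 4 int G^2 - 2 int P G,
   so it suffices to show  int P G >= 0.  Now int P G = sum_{n,m} a_n a_m d(n,m) with
   d(n,m) = int chi(x + lam_n) h(x + lam_m).  The gap condition lam_{n+2} - lam_n >= pi
   implies that at each point at most one other translate overlaps a given one, which
   makes the symmetric, entrywise nonnegative matrix d diagonally dominant, hence
   positive semidefinite. *)

section \<open>The profile \<open>H\<^sup>2\<close> and its derivatives\<close>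

definition Hsq :: "real \<Rightarrow> real" where
  "Hsq y = (H y)\<^sup>2"

definition dHsq :: "real \<Rightarrow> real" where
  "dHsq y = - 2 * sin y * H y"

definition chi :: "real \<Rightarrow> real" where
  "chi y = (if \<bar>y\<bar> < pi/2 then 1 else 0)"

text \<open>The profile is continuous because \<open>cos\<close> vanishes at the kinks \<open>\<plusminus>pi/2\<close>.\<close>
lemma cos_at_kink: "\<bar>y\<bar> = pi/2 \<Longrightarrow> cos y = 0"
  by (metis cos_abs_real cos_pi_half)

lemma H_vanish: "pi/2 \<le> \<bar>y\<bar> \<Longrightarrow> H y = 0"
  by (cases "\<bar>y\<bar> = pi/2") (auto simp: H_def cos_at_kink)

lemma H_continuous: "continuous_on UNIV H"
proof -
  have "continuous_on ({-(pi/2)..pi/2} \<union> ({..-(pi/2)} \<union> {pi/2..})) H"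
    unfolding H_def
  proof (rule continuous_on_cases)
    show "\<forall>x. x \<in> {-(pi/2)..pi/2} \<and> \<not> \<bar>x\<bar> \<le> pi/2 \<or>
              x \<in> {..-(pi/2)} \<union> {pi/2..} \<and> \<bar>x\<bar> \<le> pi/2 \<longrightarrow> cos x = 0"
      by (intro allI impI cos_at_kink) auto
  qed (auto intro!: continuous_intros)
  moreover have "{-(pi/2)..pi/2} \<union> ({..-(pi/2)} \<union> {pi/2..}) = (UNIV::real set)" by auto
  ultimately show ?thesis by simp
qed

lemma Hsq_vanish: "pi/2 \<le> \<bar>y\<bar> \<Longrightarrow> Hsq y = 0"
  by (simp add: Hsq_def H_vanish)

lemma dHsq_vanish: "pi/2 \<le> \<bar>y\<bar> \<Longrightarrow> dHsq y = 0"
  by (simp add: dHsq_def H_vanish)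

lemma chi_vanish: "pi/2 \<le> \<bar>y\<bar> \<Longrightarrow> chi y = 0"
  by (simp add: chi_def)

lemma Hsq_even: "Hsq (-y) = Hsq y"
  by (simp add: Hsq_def H_def)

lemma chi_even: "chi (-y) = chi y"
  by (simp add: chi_def)

lemma Hsq_bounds: "0 \<le> Hsq y" "Hsq y \<le> 1"
  by (auto simp: Hsq_def H_def abs_square_le_1)

lemma chi_bounds: "0 \<le> chi y" "chi y \<le> 1"
  by (auto simp: chi_def)

lemma Hsq_abs_bound: "\<bar>Hsq y\<bar> \<le> 1"
  using Hsq_bounds[of y] by simp

lemma chi_abs_bound: "\<bar>chi y\<bar> \<le> 1"
  by (simp add: chi_def)

lemma dHsq_bound: "\<bar>dHsq y\<bar> \<le> 2"
proof -
  have "\<bar>sin y * cos y\<bar> \<le> 1" by (simp add: abs_mult mult_le_one)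
  then show ?thesis by (auto simp: dHsq_def H_def abs_mult)
qed

lemma dHsq_continuous: "continuous_on UNIV dHsq"
  unfolding dHsq_def by (intro continuous_intros H_continuous)

lemma Hsq_measurable: "Hsq \<in> borel_measurable borel"
  unfolding Hsq_def H_def by measurable

lemma dHsq_measurable: "dHsq \<in> borel_measurable borel"
  using dHsq_continuous by (rule borel_measurable_continuous_onI)

lemma chi_measurable: "chi \<in> borel_measurable borel"
  unfolding chi_def by measurable

text \<open>\<open>Hsq\<close> is differentiable everywhere: at the kinks both one-sided derivatives vanish.\<close>
lemma Hsq_has_derivative: "(Hsq has_real_derivative dHsq y) (at y)"
proof -
  let ?S = "{-(pi/2)..pi/2::real}" and ?T = "- {-(pi/2)..pi/2::real}"
  have kink: "cos y = 0" if "y \<in> closure ?S" "y \<in> closure ?T"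
  proof (rule cos_at_kink)
    have "closure ?T = {..-(pi/2)} \<union> {pi/2..}"
      by (simp add: closure_complement interior_atLeastAtMost_real) auto
    with that show "\<bar>y\<bar> = pi/2" by auto
  qed
  have eq: "Hsq = (\<lambda>x. if x \<in> ?S then (cos x)\<^sup>2 else 0)"
    by (auto simp: Hsq_def H_def fun_eq_iff abs_le_iff)
  have "((\<lambda>x. if x \<in> ?S then (cos x)\<^sup>2 else 0) has_vector_derivative
      (if y \<in> ?S then -(2 * sin y * cos y) else 0)) (at y within UNIV)"
  proof (rule has_vector_derivative_If_within_closures
      [where f' = "\<lambda>y. -(2 * sin y * cos y)" and g' = "\<lambda>_. 0"])
    show "((\<lambda>x. (cos x)\<^sup>2) has_vector_derivative - (2 * sin y * cos y))
        (at y within ?S \<union> (closure ?S \<inter> closure ?T))"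
      by (rule has_vector_derivative_at_within,
          subst has_real_derivative_iff_has_vector_derivative[symmetric])
         (auto intro!: derivative_eq_intros)
  qed (use kink in \<open>auto intro: has_vector_derivative_const\<close>)
  moreover have "(if y \<in> ?S then -(2 * sin y * cos y) else 0) = dHsq y"
    by (auto simp: dHsq_def H_def abs_le_iff)
  ultimately show ?thesis
    by (simp add: eq has_real_derivative_iff_has_vector_derivative)
qed

lemma dHsq_has_derivative:
  assumes "\<bar>y\<bar> \<noteq> pi/2"
  shows "(dHsq has_real_derivative 2 * chi y - 4 * Hsq y) (at y)"
proof (cases "\<bar>y\<bar> < pi/2")
  case True
  have "((\<lambda>x. -(2 * sin x * cos x)) has_real_derivative -(2 * (cos y * cos y - sin y * sin y))) (at y)"
    by (auto intro!: derivative_eq_intros simp: algebra_simps)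
  then have "(dHsq has_real_derivative -(2 * (cos y * cos y - sin y * sin y))) (at y)"
    by (rule has_field_derivative_transform_within_open[of _ _ _ "{-(pi/2)<..<pi/2}"])
       (use True in \<open>auto simp: dHsq_def H_def\<close>)
  moreover have "-(2 * (cos y * cos y - sin y * sin y)) = 2 * chi y - 4 * Hsq y"
    using True sin_cos_squared_add3[of y]
    by (simp add: chi_def Hsq_def H_def power2_eq_square algebra_simps del: sin_cos_squared_add3)
  ultimately show ?thesis by simp
next
  case False
  with assms have "pi/2 < \<bar>y\<bar>" by linarith
  then have "(dHsq has_real_derivative 0) (at y)"
    by (intro has_field_derivative_transform_within_open[OF DERIV_const, of "- {-(pi/2)..pi/2}"])
       (auto simp: dHsq_def H_def)
  then show ?thesis using False by (simp add: chi_def Hsq_vanish)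
qed

section \<open>Sums of translates\<close>

definition shift_sum :: "(real \<Rightarrow> real) \<Rightarrow> ('i \<Rightarrow> real) \<Rightarrow> ('i \<Rightarrow> real) \<Rightarrow> 'i set \<Rightarrow> real \<Rightarrow> real"
  where "shift_sum f a lam N x = (\<Sum>n\<in>N. a n * f (x + lam n))"

lemma shift_sum_bound:
  assumes "\<And>y. \<bar>f y\<bar> \<le> c"
  shows "\<bar>shift_sum f a lam N x\<bar> \<le> c * (\<Sum>n\<in>N. \<bar>a n\<bar>)"
proof -
  have "\<bar>shift_sum f a lam N x\<bar> \<le> (\<Sum>n\<in>N. \<bar>a n * f (x + lam n)\<bar>)"
    unfolding shift_sum_def by (rule sum_abs)
  also have "\<dots> \<le> (\<Sum>n\<in>N. c * \<bar>a n\<bar>)"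
    by (intro sum_mono) (metis abs_ge_zero abs_mult assms mult.commute mult_left_mono)
  finally show ?thesis by (simp add: sum_distrib_left)
qed

lemma shift_sum_vanish:
  assumes "finite N" and "\<And>y. r \<le> \<bar>y\<bar> \<Longrightarrow> f y = 0"
    and "(\<Sum>n\<in>N. \<bar>lam n\<bar>) + r \<le> \<bar>x\<bar>"
  shows "shift_sum f a lam N x = 0"
  unfolding shift_sum_def
proof (intro sum.neutral ballI)
  fix n assume "n \<in> N"
  then have "\<bar>lam n\<bar> \<le> (\<Sum>n\<in>N. \<bar>lam n\<bar>)"
    using assms(1) by (intro member_le_sum) auto
  then have "r \<le> \<bar>x + lam n\<bar>" using assms(3) by linarith
  then show "a n * f (x + lam n) = 0" using assms(2) by simp
qed

lemma shift_sum_has_derivative: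
  assumes "\<And>n. n \<in> N \<Longrightarrow> (f has_real_derivative f' (x + lam n)) (at (x + lam n))"
  shows "(shift_sum f a lam N has_real_derivative shift_sum f' a lam N x) (at x)"
  unfolding shift_sum_def
proof (rule DERIV_sum)
  fix n assume "n \<in> N"
  have "((\<lambda>x. f (x + lam n)) has_real_derivative f' (x + lam n) * 1) (at x)"
    by (rule DERIV_chain2[where g = "\<lambda>x. x + lam n", OF assms[OF \<open>n \<in> N\<close>]]) (auto intro!: derivative_eq_intros)
  then show "((\<lambda>x. a n * f (x + lam n)) has_real_derivative a n * f' (x + lam n)) (at x)"
    using DERIV_cmult by fastforce
qed

lemma shift_sum_continuous:
  assumes "continuous_on UNIV f"
  shows "continuous_on UNIV (shift_sum f a lam N)"
proof -
  have "continuous_on UNIV (\<lambda>x. f (x + c))" for c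
    by (rule continuous_on_compose2[OF assms]) (auto intro!: continuous_intros)
  then show ?thesis
    unfolding shift_sum_def by (intro continuous_on_sum continuous_on_mult continuous_on_const)
qed

lemma shift_sum_measurable:
  assumes "f \<in> borel_measurable borel"
  shows "shift_sum f a lam N \<in> borel_measurable borel"
  unfolding shift_sum_def using assms by measurable

section \<open>Integrability and integration by parts\<close>

lemma integrable_bounded_compact_support:
  fixes f :: "real \<Rightarrow> real"
  assumes "f \<in> borel_measurable borel" "\<And>x. \<bar>f x\<bar> \<le> C" "\<And>x. R \<le> \<bar>x\<bar> \<Longrightarrow> f x = 0"
  shows "integrable lborel f"
proof (rule Bochner_Integration.integrable_bound[where f="\<lambda>x. C * indicator {-R..R} x"])
  show "integrable lborel (\<lambda>x. C * indicator {-R..R} x)"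
    using borel_integrable_atLeastAtMost[of "-R" R "\<lambda>_. C"] by simp
  show "f \<in> borel_measurable lborel" using assms(1) by simp
  have "0 \<le> C" using assms(2)[of 0] by linarith
  then show "AE x in lborel. norm (f x) \<le> norm (C * indicator {-R..R} x)"
    using assms(2,3) by (intro AE_I2) (fastforce simp: indicator_def)
qed

lemma integrable_shift_sum_mult:
  assumes "finite N" and "f \<in> borel_measurable borel" and "g \<in> borel_measurable borel"
    and "\<And>y. \<bar>f y\<bar> \<le> c" and "\<And>y. \<bar>g y\<bar> \<le> c'" and "\<And>y. r \<le> \<bar>y\<bar> \<Longrightarrow> f y = 0"
  shows "integrable lborel (\<lambda>x. shift_sum f a lam N x * shift_sum g a lam N x)"
proof (rule integrable_bounded_compact_support)
  show "(\<lambda>x. shift_sum f a lam N x * shift_sum g a lam N x) \<in> borel_measurable borel"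
    using shift_sum_measurable[OF assms(2)] shift_sum_measurable[OF assms(3)] by measurable
  let ?S = "\<Sum>n\<in>N. \<bar>a n\<bar>"
  fix x
  have "0 \<le> c" using assms(4)[of 0] by linarith
  then show "\<bar>shift_sum f a lam N x * shift_sum g a lam N x\<bar> \<le> c * ?S * (c' * ?S)"
    unfolding abs_mult using shift_sum_bound[OF assms(4)] shift_sum_bound[OF assms(5)]
    by (intro mult_mono) (auto simp: sum_nonneg)
next
  fix x :: real assume "(\<Sum>n\<in>N. \<bar>lam n\<bar>) + r \<le> \<bar>x\<bar>"
  then show "shift_sum f a lam N x * shift_sum g a lam N x = 0"
    using shift_sum_vanish[OF assms(1,6)] by simp
qed

lemma integral_by_parts_compact_support:
  fixes f g g' :: "real \<Rightarrow> real"
  assumes "finite E" and "0 \<le> R"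
    and f_deriv: "\<And>x. (f has_real_derivative g x) (at x)"
    and g_deriv: "\<And>x. x \<notin> E \<Longrightarrow> (g has_real_derivative g' x) (at x)"
    and "continuous_on UNIV g"
    and supp: "\<And>x. R \<le> \<bar>x\<bar> \<Longrightarrow> f x = 0 \<and> g x = 0"
    and "integrable lborel (\<lambda>x. g x * g x + f x * g' x)"
  shows "(LINT x|lborel. g x * g x + f x * g' x) = 0"
proof -
  define F where "F x = g x * g x + f x * g' x" for x
  have "continuous_on UNIV f"
    using f_deriv by (metis DERIV_isCont continuous_at_imp_continuous_on)
  then have "(F has_integral f R * g R - f (-R) * g (-R)) {-R..R}"
  proof (intro fundamental_theorem_of_calculus_interior_strong[OF assms(1)])
    show "continuous_on {-R..R} (\<lambda>x. f x * g x)"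
      using \<open>continuous_on UNIV f\<close> \<open>continuous_on UNIV g\<close>
      by (intro continuous_on_mult) (auto intro: continuous_on_subset)
    fix x assume "x \<in> {-R<..<R} - E"
    then have "((\<lambda>x. f x * g x) has_real_derivative g x * g x + g' x * f x) (at x)"
      using DERIV_mult[OF f_deriv g_deriv] by auto
    then show "((\<lambda>x. f x * g x) has_vector_derivative F x) (at x)"
      by (simp add: F_def has_real_derivative_iff_has_vector_derivative mult.commute)
  qed (use \<open>0 \<le> R\<close> in simp)
  moreover have "f R = 0" "f (-R) = 0" using supp[of R] supp[of "-R"] \<open>0 \<le> R\<close> by auto
  ultimately have "((\<lambda>x. if x \<in> {-R..R} then F x else 0) has_integral 0) UNIV"
    unfolding has_integral_restrict_UNIV by simp
  moreover have "(\<lambda>x. if x \<in> {-R..R} then F x else 0) = F"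
  proof
    fix x
    show "(if x \<in> {-R..R} then F x else 0) = F x"
    proof (cases "x \<in> {-R..R}")
      case False
      then have "R \<le> \<bar>x\<bar>" by auto
      then show ?thesis using supp[of x] by (simp add: F_def)
    qed simp
  qed
  ultimately have "(F has_integral 0) UNIV" by simp
  then show ?thesis
    unfolding F_def[abs_def] using has_integral_integral_lborel[OF assms(7)] has_integral_unique
    by blast
qed

section \<open>Diagonally dominant quadratic forms\<close>

lemma diag_dominant_quad_form_nonneg:
  fixes d :: "'i \<Rightarrow> 'i \<Rightarrow> real" and a :: "'i \<Rightarrow> real"
  assumes fin: "finite N" and sym: "\<And>n m. d n m = d m n"
    and nn: "\<And>n m. n \<noteq> m \<Longrightarrow> 0 \<le> d n m"
    and dom: "\<And>n. n \<in> N \<Longrightarrow> (\<Sum>m\<in>N-{n}. d n m) \<le> d n n"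
  shows "0 \<le> (\<Sum>n\<in>N. \<Sum>m\<in>N. a n * a m * d n m)"
proof -
  define e where "e n m = (if n = m then 0 else d n m)" for n m
  have e_sym: "e n m = e m n" for n m using sym by (simp add: e_def)
  have e_sum: "(\<Sum>m\<in>N. e n m) = (\<Sum>m\<in>N-{n}. d n m)" if "n \<in> N" for n
  proof -
    have "(\<Sum>m\<in>N. e n m) = (\<Sum>m\<in>N-{n}. e n m)"
      using fin that by (intro sum.mono_neutral_right) (auto simp: e_def)
    also have "\<dots> = (\<Sum>m\<in>N-{n}. d n m)" by (intro sum.cong) (auto simp: e_def)
    finally show ?thesis .
  qed
  text \<open>Termwise, \<open>a\<^sub>n a\<^sub>m d\<^sub>n\<^sub>m \<ge> -(a\<^sub>n\<^sup>2 + a\<^sub>m\<^sup>2)/2 \<cdot> d\<^sub>n\<^sub>m\<close> off the diagonal.\<close>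
  have pw: "a n * a m * d n m \<ge> (if n = m then (a n)\<^sup>2 * d n n else 0) - ((a n)\<^sup>2 + (a m)\<^sup>2) / 2 * e n m"
    for n m
  proof (cases "n = m")
    case False
    have "0 \<le> ((a n + a m)\<^sup>2 / 2) * d n m" using nn[OF False] by simp
    then show ?thesis using False by (simp add: e_def power2_eq_square field_simps)
  qed (simp add: e_def power2_eq_square)
  have lower: "(\<Sum>n\<in>N. \<Sum>m\<in>N. a n * a m * d n m) \<ge>
        (\<Sum>n\<in>N. \<Sum>m\<in>N. (if n = m then (a n)\<^sup>2 * d n n else 0) - ((a n)\<^sup>2 + (a m)\<^sup>2) / 2 * e n m)"
    by (intro sum_mono pw)
  have "(\<Sum>n\<in>N. \<Sum>m\<in>N. (if n = m then (a n)\<^sup>2 * d n n else 0) - ((a n)\<^sup>2 + (a m)\<^sup>2) / 2 * e n m)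
      = (\<Sum>n\<in>N. (a n)\<^sup>2 * d n n) - (\<Sum>n\<in>N. \<Sum>m\<in>N. (a n)\<^sup>2 / 2 * e n m)
                 - (\<Sum>n\<in>N. \<Sum>m\<in>N. (a m)\<^sup>2 / 2 * e n m)"
    using fin by (simp add: sum_subtractf sum.distrib add_divide_distrib distrib_right sum.delta)
  also have "(\<Sum>n\<in>N. \<Sum>m\<in>N. (a m)\<^sup>2 / 2 * e n m) = (\<Sum>n\<in>N. \<Sum>m\<in>N. (a n)\<^sup>2 / 2 * e n m)"
    by (subst sum.swap) (simp add: e_sym)
  also have "(\<Sum>n\<in>N. (a n)\<^sup>2 * d n n) - (\<Sum>n\<in>N. \<Sum>m\<in>N. (a n)\<^sup>2 / 2 * e n m)
                 - (\<Sum>n\<in>N. \<Sum>m\<in>N. (a n)\<^sup>2 / 2 * e n m)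
           = (\<Sum>n\<in>N. (a n)\<^sup>2 * (d n n - (\<Sum>m\<in>N. e n m)))"
    by (simp add: sum_subtractf algebra_simps sum_distrib_left sum_distrib_right)
  also have "\<dots> \<ge> 0"
    by (intro sum_nonneg mult_nonneg_nonneg) (auto simp: e_sum dom)
  finally show ?thesis using lower by linarith
qed

section \<open>Overlap of translates under the gap condition\<close>

lemma close_points_adjacent:
  fixes lam :: "int \<Rightarrow> real"
  assumes "strict_mono lam" "\<And>n. lam (n + 2) - lam n \<ge> pi" "\<bar>lam i - lam j\<bar> < pi"
  shows "\<bar>i - j\<bar> \<le> 1"
proof (rule ccontr)
  assume "\<not> \<bar>i - j\<bar> \<le> 1"
  then consider "i + 2 \<le> j" | "j + 2 \<le> i" by linarith
  then show False
  proof cases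
    case 1
    then have "lam (i + 2) \<le> lam j" using assms(1) by (simp add: strict_mono_less_eq)
    then show False using assms(2)[of i] assms(3) by linarith
  next
    case 2
    then have "lam (j + 2) \<le> lam i" using assms(1) by (simp add: strict_mono_less_eq)
    then show False using assms(2)[of j] assms(3) by linarith
  qed
qed

text \<open>At any point covered by the support of one translate, at most one other translate
  is also supported there (the three indices would be pairwise adjacent).\<close>
lemma overlap_count:
  fixes lam :: "int \<Rightarrow> real"
  assumes mono: "strict_mono lam" and gap: "\<And>n. lam (n + 2) - lam n \<ge> pi"
    and "finite N" and inside: "\<bar>x + lam n\<bar> < pi/2"
  shows "(\<Sum>m\<in>N-{n}. chi (x + lam m)) \<le> 1"
proof -
  define M where "M = {m \<in> N-{n}. \<bar>x + lam m\<bar> < pi/2}"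
  have "(\<Sum>m\<in>N-{n}. chi (x + lam m)) = (\<Sum>m\<in>M. 1)"
    unfolding M_def using \<open>finite N\<close> by (subst sum.inter_filter) (auto simp: chi_def)
  moreover have "card M \<le> Suc 0"
  proof (subst card_le_Suc0_iff_eq)
    show "finite M" using \<open>finite N\<close> by (simp add: M_def)
    show "\<forall>m1\<in>M. \<forall>m2\<in>M. m1 = m2"
    proof (intro ballI)
      fix m1 m2 assume "m1 \<in> M" "m2 \<in> M"
      then have x: "\<bar>x + lam m1\<bar> < pi/2" "\<bar>x + lam m2\<bar> < pi/2" "m1 \<noteq> n" "m2 \<noteq> n"
        by (auto simp: M_def)
      have "\<bar>m1 - n\<bar> \<le> 1" "\<bar>m2 - n\<bar> \<le> 1" "\<bar>m1 - m2\<bar> \<le> 1"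
        by (rule close_points_adjacent[OF mono gap]; use x inside in arith)+
      then show "m1 = m2" using x(3,4) by arith
    qed
  qed
  ultimately show ?thesis by simp
qed

definition overlap :: "real \<Rightarrow> real \<Rightarrow> real" where
  "overlap s t = (LINT x|lborel. chi (x + s) * Hsq (x + t))"

lemma integrable_overlap: "integrable lborel (\<lambda>x. chi (x + s) * Hsq (x + t))"
proof (rule integrable_bounded_compact_support[where C = 1 and R = "\<bar>t\<bar> + pi/2"])
  show "(\<lambda>x. chi (x + s) * Hsq (x + t)) \<in> borel_measurable borel"
    using chi_measurable Hsq_measurable by measurable
  show "\<bar>chi (x + s) * Hsq (x + t)\<bar> \<le> 1" for x
    using chi_bounds[of "x + s"] Hsq_bounds[of "x + t"] by (simp add: abs_mult mult_le_one)
  show "chi (x + s) * Hsq (x + t) = 0" if "\<bar>t\<bar> + pi/2 \<le> \<bar>x\<bar>" for x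
  proof -
    have "pi/2 \<le> \<bar>x + t\<bar>" using that by arith
    then show ?thesis by (simp add: Hsq_vanish)
  qed
qed

text \<open>Reflecting \<open>x \<mapsto> -s-t-x\<close> and using evenness of both profiles.\<close>
lemma overlap_sym: "overlap s t = overlap t s"
proof -
  have shift: "(-s - t) + -1 * x + s = -(x + t)" "(-s - t) + -1 * x + t = -(x + s)" for x
    by simp_all
  have "overlap s t = \<bar>-1::real\<bar> *\<^sub>R (LINT x|lborel. chi ((-s - t) + -1 * x + s) * Hsq ((-s - t) + -1 * x + t))"
    unfolding overlap_def by (rule lborel_integral_real_affine) simp
  also have "\<dots> = overlap t s"
    unfolding shift chi_even Hsq_even overlap_def by (simp add: mult.commute)
  finally show ?thesis .
qed

lemma overlap_nonneg: "0 \<le> overlap s t"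
  unfolding overlap_def by (rule Bochner_Integration.integral_nonneg) (simp add: chi_bounds Hsq_bounds)

text \<open>Diagonal dominance of the overlap matrix, obtained by integrating the pointwise
  bound of \<open>overlap_count\<close>.\<close>
lemma overlap_diag_dominant:
  fixes lam :: "int \<Rightarrow> real"
  assumes mono: "strict_mono lam" and gap: "\<And>n. lam (n + 2) - lam n \<ge> pi" and "finite N"
  shows "(\<Sum>m\<in>N-{n}. overlap (lam n) (lam m)) \<le> overlap (lam n) (lam n)"
proof -
  have pointwise: "0 \<le> Hsq (x + lam n) * (chi (x + lam n) - (\<Sum>m\<in>N-{n}. chi (x + lam m)))" for x
  proof (cases "\<bar>x + lam n\<bar> < pi/2")
    case True
    then show ?thesis
      using overlap_count[OF mono gap \<open>finite N\<close> True] Hsq_bounds[of "x + lam n"] by (simp add: chi_def)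
  qed (simp add: Hsq_vanish)
  have "(\<Sum>m\<in>N-{n}. overlap (lam n) (lam m)) = (\<Sum>m\<in>N-{n}. overlap (lam m) (lam n))"
    by (rule sum.cong[OF refl overlap_sym])
  also have "\<dots> = (LINT x|lborel. (\<Sum>m\<in>N-{n}. chi (x + lam m) * Hsq (x + lam n)))"
    by (simp add: Bochner_Integration.integral_sum overlap_def integrable_overlap)
  finally have sum_overlap: "(\<Sum>m\<in>N-{n}. overlap (lam n) (lam m))
      = (LINT x|lborel. (\<Sum>m\<in>N-{n}. chi (x + lam m) * Hsq (x + lam n)))" .
  have "overlap (lam n) (lam n) - (\<Sum>m\<in>N-{n}. overlap (lam n) (lam m))
      = (LINT x|lborel. chi (x + lam n) * Hsq (x + lam n))
        - (LINT x|lborel. (\<Sum>m\<in>N-{n}. chi (x + lam m) * Hsq (x + lam n)))"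
    unfolding sum_overlap by (simp only: overlap_def)
  also have "\<dots> = (LINT x|lborel. chi (x + lam n) * Hsq (x + lam n)
                        - (\<Sum>m\<in>N-{n}. chi (x + lam m) * Hsq (x + lam n)))"
    by (rule Bochner_Integration.integral_diff[symmetric])
       (auto intro!: integrable_overlap Bochner_Integration.integrable_sum)
  also have "\<dots> = (LINT x|lborel. Hsq (x + lam n) * (chi (x + lam n) - (\<Sum>m\<in>N-{n}. chi (x + lam m))))"
    by (simp add: algebra_simps sum_distrib_left)
  also have "\<dots> \<ge> 0" by (rule Bochner_Integration.integral_nonneg) (rule pointwise)
  finally show ?thesis by simp
qed

lemma cross_term_nonneg:
  fixes lam :: "int \<Rightarrow> real"
  assumes mono: "strict_mono lam" and gap: "\<And>n. lam (n + 2) - lam n \<ge> pi" and "finite N"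
  shows "0 \<le> (LINT x|lborel. shift_sum chi a lam N x * shift_sum Hsq a lam N x)"
proof -
  have "(LINT x|lborel. shift_sum chi a lam N x * shift_sum Hsq a lam N x)
      = (LINT x|lborel. (\<Sum>n\<in>N. \<Sum>m\<in>N. a n * a m * (chi (x + lam n) * Hsq (x + lam m))))"
    unfolding shift_sum_def sum_product by (simp add: algebra_simps)
  also have "\<dots> = (\<Sum>n\<in>N. \<Sum>m\<in>N. a n * a m * overlap (lam n) (lam m))"
    by (simp add: Bochner_Integration.integral_sum Bochner_Integration.integrable_sum
        integrable_overlap overlap_def)
  also have "\<dots> \<ge> 0"
    by (rule diag_dominant_quad_form_nonneg[OF \<open>finite N\<close> overlap_sym overlap_nonneg
          overlap_diag_dominant[OF mono gap \<open>finite N\<close>]])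
  finally show ?thesis .
qed

section \<open>The energy identity and the main theorem\<close>

lemma shift_sum_second_derivative:
  assumes "\<And>n. n \<in> N \<Longrightarrow> \<bar>x + lam n\<bar> \<noteq> pi/2"
  shows "(shift_sum dHsq a lam N has_real_derivative
            2 * shift_sum chi a lam N x - 4 * shift_sum Hsq a lam N x) (at x)"
proof -
  have "shift_sum (\<lambda>y. 2 * chi y - 4 * Hsq y) a lam N x
      = 2 * shift_sum chi a lam N x - 4 * shift_sum Hsq a lam N x"
    by (simp add: shift_sum_def sum_subtractf sum_distrib_left algebra_simps)
  moreover have "(shift_sum dHsq a lam N has_real_derivative
      shift_sum (\<lambda>y. 2 * chi y - 4 * Hsq y) a lam N x) (at x)"
    using assms by (intro shift_sum_has_derivative dHsq_has_derivative)
  ultimately show ?thesis by simp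
qed

lemma energy_identity:
  fixes a lam :: "'i \<Rightarrow> real"
  assumes "finite N"
  defines "G \<equiv> shift_sum Hsq a lam N" and "G1 \<equiv> shift_sum dHsq a lam N"
    and "P \<equiv> shift_sum chi a lam N"
  shows "(LINT x|lborel. (G1 x)\<^sup>2) = 4 * (LINT x|lborel. (G x)\<^sup>2) - 2 * (LINT x|lborel. P x * G x)"
proof -
  define R where "R = (\<Sum>n\<in>N. \<bar>lam n\<bar>) + pi/2"
  define E where "E = (\<lambda>n. pi/2 - lam n) ` N \<union> (\<lambda>n. -(pi/2) - lam n) ` N"
  have dG1: "(G1 has_real_derivative 2 * P x - 4 * G x) (at x)" if "x \<notin> E" for x
  proof -
    have "\<bar>x + lam n\<bar> \<noteq> pi/2" if "n \<in> N" for n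
    proof
      assume "\<bar>x + lam n\<bar> = pi/2"
      then have "x = pi/2 - lam n \<or> x = -(pi/2) - lam n" by linarith
      then show False using \<open>x \<notin> E\<close> that by (auto simp: E_def)
    qed
    then show ?thesis
      unfolding G1_def P_def G_def by (rule shift_sum_second_derivative)
  qed
  have integrable: "integrable lborel (\<lambda>x. G1 x * G1 x)" "integrable lborel (\<lambda>x. G x * G x)"
    "integrable lborel (\<lambda>x. P x * G x)"
    unfolding G_def G1_def P_def
    using integrable_shift_sum_mult[OF \<open>finite N\<close> dHsq_measurable dHsq_measurable dHsq_bound
        dHsq_bound dHsq_vanish]
      integrable_shift_sum_mult[OF \<open>finite N\<close> Hsq_measurable Hsq_measurable Hsq_abs_bound
        Hsq_abs_bound Hsq_vanish]
      integrable_shift_sum_mult[OF \<open>finite N\<close> chi_measurable Hsq_measurable chi_abs_bound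
        Hsq_abs_bound chi_vanish]
    by blast+
  have split: "(\<lambda>x. G1 x * G1 x + G x * (2 * P x - 4 * G x))
      = (\<lambda>x. G1 x * G1 x + 2 * (P x * G x) - 4 * (G x * G x))"
    by (auto simp: algebra_simps fun_eq_iff)
  have integrable_split: "integrable lborel (\<lambda>x. G1 x * G1 x + 2 * (P x * G x) - 4 * (G x * G x))"
    using integrable by (intro Bochner_Integration.integrable_diff Bochner_Integration.integrable_add
        Bochner_Integration.integrable_mult_right)
  have "(LINT x|lborel. G1 x * G1 x + G x * (2 * P x - 4 * G x)) = 0"
  proof (rule integral_by_parts_compact_support[where E = E and R = R])
    show "(G has_real_derivative G1 x) (at x)" for x
      unfolding G_def G1_def by (intro shift_sum_has_derivative Hsq_has_derivative)
    show "R \<le> \<bar>x\<bar> \<Longrightarrow> G x = 0 \<and> G1 x = 0" for x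
      unfolding R_def G_def G1_def
      using shift_sum_vanish[OF \<open>finite N\<close>, of "pi/2"] Hsq_vanish dHsq_vanish by blast
    show "integrable lborel (\<lambda>x. G1 x * G1 x + G x * (2 * P x - 4 * G x))"
      unfolding split by (rule integrable_split)
  qed (use dG1 in \<open>auto simp: E_def R_def \<open>finite N\<close> sum_nonneg G1_def
        intro: shift_sum_continuous dHsq_continuous\<close>)
  then have "(LINT x|lborel. G1 x * G1 x) + 2 * (LINT x|lborel. P x * G x)
      - 4 * (LINT x|lborel. G x * G x) = 0"
    unfolding split using integrable by simp
  then show ?thesis by (simp add: power2_eq_square)
qed

theorem mainTheorem3:
  fixes lam :: "int \<Rightarrow> real" and a :: "int \<Rightarrow> real" and G :: "real \<Rightarrow> real"
  assumes "strict_mono lam"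
    and "\<And>n. lam (n + 2) - lam n \<ge> pi"
    and "finite {n. a n \<noteq> 0}"
    and "\<And>x. G x = (\<Sum>n\<in>{n. a n \<noteq> 0}. a n * (H (x + lam n))\<^sup>2)"
  shows "(LINT x|lborel. \<bar>deriv G x\<bar>\<^sup>2) \<le> 4 * (LINT x|lborel. \<bar>G x\<bar>\<^sup>2)"
proof -
  define N where "N = {n. a n \<noteq> 0}"
  have G_eq: "G = shift_sum Hsq a lam N"
    using assms(4) by (auto simp: N_def shift_sum_def Hsq_def)
  have "deriv G x = shift_sum dHsq a lam N x" for x
    unfolding G_eq by (intro DERIV_imp_deriv shift_sum_has_derivative Hsq_has_derivative)
  moreover have "0 \<le> (LINT x|lborel. shift_sum chi a lam N x * G x)"
    unfolding G_eq using cross_term_nonneg[OF assms(1,2)] assms(3) by (simp add: N_def)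
  ultimately show ?thesis
    using energy_identity[of N a lam] assms(3) by (simp add: N_def G_eq)
qed

end
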